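(* For every $3\times 3$ bimatrix game $(A,B)$: if $(A,B)$ has a unique Nash equilibrium and it lies in the interior of $\Sigma_A\times\Sigma_B$, then the transition diagram of $(A,B)$ has no dominated row or column, i.e. for all $\{i,i',i''\}=\{j,j',j''\}=\{1,2,3\}$, $(i,j)\to(i',j)$ and $(i,j')\to(i',j')$ imply $(i',j'')\to(i,j'')$, and $(i,j)\to(i,j')$ and $(i',j)\to(i',j')$ imply $(i'',j')\to(i'',j)$.
   Context: $\Sigma_A$ is the set of probability row vectors and $\Sigma_B$ the set of probability column vectors in $\mathbb{R}^3$. For $A=(a_{ij})$, $B=(b_{ij})\in\mathbb{R}^{3\times3}$, $\mathrm{BR}_A(q)=\operatorname{argmax}_{p\in\Sigma_A} pAq$, $\mathrm{BR}_B(p)=\operatorname{argmax}_{q\in\Sigma_B} pBq$; a Nash equilibrium is $(\bar p,\bar q)$ with $\bar p\in\mathrm{BR}_A(\bar q)$, $\bar q\in \mathrm{BR}_B(\bar p)$. The transition relation on cells $(i,j)$, $i,j\in\{1,2,3\}$, is: for $i\neq i'$, $(i,j)\to(i',j)$ iff $a_{i'j}\ge a_{ij}$; for $j\neq j'$, $(i,j)\to(i,j')$ iff $b_{ij'}\ge b_{ij}$. *)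

theory Defs
  imports "HOL-Analysis.Analysis"
begin

definition simplex3 :: "(real^3) set" where
  "simplex3 = {p. (\<forall>i. 0 \<le> p $ i) \<and> (\<Sum>i\<in>UNIV. p $ i) = 1}"

definition payoff :: "real^3 \<Rightarrow> real^3^3 \<Rightarrow> real^3 \<Rightarrow> real" where
  "payoff p M q = (\<Sum>i\<in>UNIV. \<Sum>j\<in>UNIV. p $ i * M $ i $ j * q $ j)"

definition BR_A :: "real^3^3 \<Rightarrow> real^3 \<Rightarrow> (real^3) set" where
  "BR_A A q = {p \<in> simplex3. \<forall>p'\<in>simplex3. payoff p' A q \<le> payoff p A q}"

definition BR_B :: "real^3^3 \<Rightarrow> real^3 \<Rightarrow> (real^3) set" where
  "BR_B B p = {q \<in> simplex3. \<forall>q'\<in>simplex3. payoff p B q' \<le> payoff p B q}"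

definition nash_eq :: "real^3^3 \<Rightarrow> real^3^3 \<Rightarrow> real^3 \<Rightarrow> real^3 \<Rightarrow> bool" where
  "nash_eq A B p q \<longleftrightarrow> p \<in> BR_A A q \<and> q \<in> BR_B B p"

definition trans_rel :: "real^3^3 \<Rightarrow> real^3^3 \<Rightarrow> 3 \<times> 3 \<Rightarrow> 3 \<times> 3 \<Rightarrow> bool" where
  "trans_rel A B c d \<longleftrightarrow>
     (case c of (i, j) \<Rightarrow> case d of (i', j') \<Rightarrow>
        (i \<noteq> i' \<and> j = j' \<and> A $ i $ j \<le> A $ i' $ j) \<or>
        (i = i' \<and> j \<noteq> j' \<and> B $ i $ j \<le> B $ i $ j'))"

end

theory Submission
  imports Defs
begin

text \<open>At an equilibrium every row played with positive probability is a best reply to the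
  column strategy. An interior equilibrium plays every row, and its column strategy gives
  every column positive weight, so a row weakly dominated by another row must earn the same
  payoff in every column. Hence if one transition points from row i to row i' in two of the
  columns, it cannot point strictly the other way in the third. Transposing the game gives
  the statement for columns.\<close>

definition row_payoff :: "real^3^3 \<Rightarrow> real^3 \<Rightarrow> 3 \<Rightarrow> real" where
  "row_payoff M q i = (\<Sum>j\<in>UNIV. M $ i $ j * q $ j)"

lemma payoff_eq_sum_row_payoff: "payoff p M q = (\<Sum>i\<in>UNIV. p $ i * row_payoff M q i)"
  unfolding payoff_def row_payoff_def by (simp add: sum_distrib_left mult.assoc)

lemma payoff_transpose: "payoff q (transpose M) p = payoff p M q"
  unfolding payoff_def transpose_def by (subst sum.swap) (simp add: ac_simps)

lemma BR_B_eq_BR_A_transpose: "BR_B B p = BR_A (transpose B) p"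
  unfolding BR_A_def BR_B_def payoff_transpose ..

lemma simplex3_move_mass:
  fixes p :: "real^3"
  assumes "p \<in> simplex3" "k \<noteq> i"
  defines "p' \<equiv> (\<chi> m. p $ m + p $ i * ((if m = k then 1 else 0) - (if m = i then 1 else 0)))"
  shows "p' \<in> simplex3"
    and "(\<Sum>m\<in>UNIV. p' $ m * r m) = (\<Sum>m\<in>UNIV. p $ m * r m) + p $ i * (r k - r i)"
proof -
  have nonneg: "\<forall>m. 0 \<le> p $ m" and total: "(\<Sum>m\<in>UNIV. p $ m) = 1"
    using assms(1) unfolding simplex3_def by auto
  have "\<forall>m. 0 \<le> p' $ m"
    using nonneg assms(2) unfolding p'_def by auto
  moreover have "(\<Sum>m\<in>UNIV. p' $ m) = 1"
    unfolding p'_def using total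
    by (simp add: sum.distrib sum_subtractf sum_distrib_left[symmetric] right_diff_distrib)
  ultimately show "p' \<in> simplex3" unfolding simplex3_def by auto
  have "p' $ m * r m = p $ m * r m + p $ i * ((if m = k then r m else 0) - (if m = i then r m else 0))" for m
    unfolding p'_def by (simp add: algebra_simps)
  then show "(\<Sum>m\<in>UNIV. p' $ m * r m) = (\<Sum>m\<in>UNIV. p $ m * r m) + p $ i * (r k - r i)"
    by (simp add: sum.distrib sum_subtractf sum_distrib_left[symmetric])
qed

lemma row_payoff_le_of_BR_A:
  assumes "p \<in> BR_A A q" "0 < p $ i"
  shows "row_payoff A q k \<le> row_payoff A q i"
proof (cases "k = i")
  case False
  define p' where "p' = (\<chi> m. p $ m + p $ i * ((if m = k then 1 else 0) - (if m = i then 1 else 0)))"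
  have p: "p \<in> simplex3" and best: "\<forall>p'\<in>simplex3. payoff p' A q \<le> payoff p A q"
    using assms(1) unfolding BR_A_def by auto
  have "payoff p' A q \<le> payoff p A q"
    using best simplex3_move_mass(1)[OF p False] unfolding p'_def by blast
  moreover have "payoff p' A q = payoff p A q + p $ i * (row_payoff A q k - row_payoff A q i)"
    unfolding payoff_eq_sum_row_payoff p'_def by (rule simplex3_move_mass(2)[OF p False])
  ultimately have "p $ i * (row_payoff A q k - row_payoff A q i) \<le> 0" by simp
  with assms(2) show ?thesis by (simp add: mult_le_0_iff)
qed simp

lemma BR_A_no_dominated_row:
  assumes "p \<in> BR_A A q" "0 < p $ i" "\<forall>l. 0 < q $ l"
    and dominated: "\<forall>l. A $ i $ l \<le> A $ i' $ l"
  shows "A $ i' $ l \<le> A $ i $ l"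
proof (rule ccontr)
  assume "\<not> A $ i' $ l \<le> A $ i $ l"
  then have "\<exists>l. A $ i $ l * q $ l < A $ i' $ l * q $ l"
    using assms(3) by (metis mult_less_cancel_right_pos not_le)
  moreover have "\<forall>l. A $ i $ l * q $ l \<le> A $ i' $ l * q $ l"
    using dominated assms(3) by (simp add: less_imp_le mult_right_mono)
  ultimately have "row_payoff A q i < row_payoff A q i'"
    unfolding row_payoff_def by (intro sum_strict_mono_ex1) auto
  with row_payoff_le_of_BR_A[OF assms(1,2), of i'] show False by simp
qed

lemma BR_B_no_dominated_column:
  assumes "q \<in> BR_B B p" "0 < q $ j" "\<forall>m. 0 < p $ m"
    and "\<forall>m. B $ m $ j \<le> B $ m $ j'"
  shows "B $ m $ j' \<le> B $ m $ j"
  using BR_A_no_dominated_row[of q "transpose B" p j j' m] assms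
  by (simp add: BR_B_eq_BR_A_transpose transpose_def)

lemma trans_rel_row_iff: "i \<noteq> i' \<Longrightarrow> trans_rel A B (i, j) (i', j) \<longleftrightarrow> A $ i $ j \<le> A $ i' $ j"
  unfolding trans_rel_def by simp

lemma trans_rel_column_iff: "j \<noteq> j' \<Longrightarrow> trans_rel A B (i, j) (i, j') \<longleftrightarrow> B $ i $ j \<le> B $ i $ j'"
  unfolding trans_rel_def by simp

lemma UNIV_3_eq:
  fixes a b c :: 3
  assumes "a \<noteq> b" "a \<noteq> c" "b \<noteq> c"
  shows "UNIV = {a, b, c}"
  using assms card_subset_eq[of UNIV "{a, b, c}"] by auto

theorem mainTheorem2:
  fixes A B :: "real^3^3"
  assumes uniq: "\<exists>!pq. nash_eq A B (fst pq) (snd pq)"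
    and interior: "\<forall>p q. nash_eq A B p q \<longrightarrow> (\<forall>i. 0 < p $ i) \<and> (\<forall>j. 0 < q $ j)"
  shows "\<forall>i i' i'' j j' j'' :: 3.
           i \<noteq> i' \<and> i \<noteq> i'' \<and> i' \<noteq> i'' \<and> j \<noteq> j' \<and> j \<noteq> j'' \<and> j' \<noteq> j'' \<longrightarrow>
           (trans_rel A B (i, j) (i', j) \<and> trans_rel A B (i, j') (i', j')
              \<longrightarrow> trans_rel A B (i', j'') (i, j'')) \<and>
           (trans_rel A B (i, j) (i, j') \<and> trans_rel A B (i', j) (i', j')
              \<longrightarrow> trans_rel A B (i'', j') (i'', j))"
proof (intro allI impI conjI)
  obtain p q where "nash_eq A B p q" using uniq by auto
  then have p_pos: "\<forall>i. 0 < p $ i" and q_pos: "\<forall>j. 0 < q $ j"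
    and "p \<in> BR_A A q" "q \<in> BR_B B p"
    using interior unfolding nash_eq_def by auto
  fix i i' i'' j j' j'' :: 3
  assume distinct: "i \<noteq> i' \<and> i \<noteq> i'' \<and> i' \<noteq> i'' \<and> j \<noteq> j' \<and> j \<noteq> j'' \<and> j' \<noteq> j''"
  then have rows: "UNIV = {i, i', i''}" and cols: "UNIV = {j, j', j''}"
    using UNIV_3_eq by blast+
  show "trans_rel A B (i', j'') (i, j'')"
    if "trans_rel A B (i, j) (i', j) \<and> trans_rel A B (i, j') (i', j')"
  proof (cases "A $ i $ j'' \<le> A $ i' $ j''")
    case True
    with that distinct cols have "\<forall>l. A $ i $ l \<le> A $ i' $ l"
      by (auto simp: trans_rel_row_iff)
    then have "A $ i' $ j'' \<le> A $ i $ j''"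
      using BR_A_no_dominated_row \<open>p \<in> BR_A A q\<close> p_pos q_pos by blast
    with distinct show ?thesis by (metis trans_rel_row_iff)
  qed (use distinct in \<open>metis trans_rel_row_iff le_cases\<close>)
  show "trans_rel A B (i'', j') (i'', j)"
    if "trans_rel A B (i, j) (i, j') \<and> trans_rel A B (i', j) (i', j')"
  proof (cases "B $ i'' $ j \<le> B $ i'' $ j'")
    case True
    with that distinct rows have "\<forall>m. B $ m $ j \<le> B $ m $ j'"
      by (auto simp: trans_rel_column_iff)
    then have "B $ i'' $ j' \<le> B $ i'' $ j"
      using BR_B_no_dominated_column \<open>q \<in> BR_B B p\<close> p_pos q_pos by blast
    with distinct show ?thesis by (metis trans_rel_column_iff)
  qed (use distinct in \<open>metis trans_rel_column_iff le_cases\<close>)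
qed

end
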